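(* Let $\mathbb{F}$ be a field with $\mathrm{char}(\mathbb{F})\neq2$, let $X$ be a unitary alternative $\mathbb{F}$-algebra, $B$ an alternative $\mathbb{F}$-algebra and $\varphi\colon B\to X$ an algebra homomorphism (not required to preserve units). Then the vector space $B\oplus X$ with multiplication $$(b,x)\cdot(b',x')=(bb',\;xx'+\varphi(b)x'+x\varphi(b'))$$ is an alternative algebra, and together with the inclusion $x\mapsto(0,x)$, the projection $(b,x)\mapsto b$ and the section $b\mapsto(b,0)$ it forms a split extension of $B$ by $X$ in $\mathbf{Alt}$.
   Context: An alternative algebra is a non-associative algebra satisfying $(yx)x=y(xx)$ and $x(xy)=(xx)y$; $\mathbf{Alt}$ is the category of such algebras with multiplicative linear maps. A split extension of $B$ by $X$ is a diagram $X\xrightarrow{k}A\underset{\beta}{\overset{\alpha}{\rightleftarrows}}B$ with $\alpha\circ\beta=\mathrm{id}_B$ and $(X,k)$ a kernel of $\alpha$. *)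

theory Defs
  imports Complex_Main "HOL-Library.Product_Plus"
begin

definition is_algebra :: "('k::field \<Rightarrow> 'v::ab_group_add \<Rightarrow> 'v) \<Rightarrow> ('v \<Rightarrow> 'v \<Rightarrow> 'v) \<Rightarrow> bool" where
  "is_algebra sc mu \<longleftrightarrow> vector_space sc \<and>
     (\<forall>x y z. mu (x + y) z = mu x z + mu y z) \<and>
     (\<forall>x y z. mu z (x + y) = mu z x + mu z y) \<and>
     (\<forall>c x y. mu (sc c x) y = sc c (mu x y)) \<and>
     (\<forall>c x y. mu x (sc c y) = sc c (mu x y))"

definition is_alt_algebra :: "('k::field \<Rightarrow> 'v::ab_group_add \<Rightarrow> 'v) \<Rightarrow> ('v \<Rightarrow> 'v \<Rightarrow> 'v) \<Rightarrow> bool" where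
  "is_alt_algebra sc mu \<longleftrightarrow> is_algebra sc mu \<and>
     (\<forall>x y. mu (mu y x) x = mu y (mu x x)) \<and>
     (\<forall>x y. mu x (mu x y) = mu (mu x x) y)"

definition unitary :: "('v \<Rightarrow> 'v \<Rightarrow> 'v) \<Rightarrow> bool" where
  "unitary mu \<longleftrightarrow> (\<exists>e. \<forall>x. mu e x = x \<and> mu x e = x)"

text \<open>Morphisms of Alt: multiplicative linear maps (units need not be preserved).\<close>
definition alg_hom :: "('k::field \<Rightarrow> 'v::ab_group_add \<Rightarrow> 'v) \<Rightarrow> ('v \<Rightarrow> 'v \<Rightarrow> 'v) \<Rightarrow>
    ('k \<Rightarrow> 'w::ab_group_add \<Rightarrow> 'w) \<Rightarrow> ('w \<Rightarrow> 'w \<Rightarrow> 'w) \<Rightarrow> ('v \<Rightarrow> 'w) \<Rightarrow> bool" where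
  "alg_hom sc1 mu1 sc2 mu2 f \<longleftrightarrow>
     (\<forall>x y. f (x + y) = f x + f y) \<and>
     (\<forall>c x. f (sc1 c x) = sc2 c (f x)) \<and>
     (\<forall>x y. f (mu1 x y) = mu2 (f x) (f y))"

text \<open>The universal property is tested
  against all alternative algebras whose underlying type is 'z (the type parameter is
  left free in the main theorem, hence universally quantified over all types).
  The zero morphism in Alt is the constant-zero map.\<close>
definition is_kernel_Alt :: "'z::ab_group_add itself \<Rightarrow>
    ('k::field \<Rightarrow> 'x::ab_group_add \<Rightarrow> 'x) \<Rightarrow> ('x \<Rightarrow> 'x \<Rightarrow> 'x) \<Rightarrow> ('x \<Rightarrow> 'a) \<Rightarrow>
    ('k \<Rightarrow> 'a::ab_group_add \<Rightarrow> 'a) \<Rightarrow> ('a \<Rightarrow> 'a \<Rightarrow> 'a) \<Rightarrow> ('a \<Rightarrow> 'b) \<Rightarrow>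
    ('b::ab_group_add) itself \<Rightarrow> bool" where
  "is_kernel_Alt _ scX muX k scA muA alpha _ \<longleftrightarrow>
     is_alt_algebra scX muX \<and>
     alg_hom scX muX scA muA k \<and> (\<forall>x. alpha (k x) = 0) \<and>
     (\<forall>(scZ :: 'k \<Rightarrow> 'z \<Rightarrow> 'z) muZ g.
        is_alt_algebra scZ muZ \<and> alg_hom scZ muZ scA muA g \<and> (\<forall>z. alpha (g z) = 0) \<longrightarrow>
        (\<exists>!h. alg_hom scZ muZ scX muX h \<and> (\<forall>z. k (h z) = g z)))"

definition split_extension_Alt :: "'z::ab_group_add itself \<Rightarrow>
    ('k::field \<Rightarrow> 'x::ab_group_add \<Rightarrow> 'x) \<Rightarrow> ('x \<Rightarrow> 'x \<Rightarrow> 'x) \<Rightarrow>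
    ('k \<Rightarrow> 'a::ab_group_add \<Rightarrow> 'a) \<Rightarrow> ('a \<Rightarrow> 'a \<Rightarrow> 'a) \<Rightarrow>
    ('k \<Rightarrow> 'b::ab_group_add \<Rightarrow> 'b) \<Rightarrow> ('b \<Rightarrow> 'b \<Rightarrow> 'b) \<Rightarrow>
    ('x \<Rightarrow> 'a) \<Rightarrow> ('a \<Rightarrow> 'b) \<Rightarrow> ('b \<Rightarrow> 'a) \<Rightarrow> bool" where
  "split_extension_Alt tz scX muX scA muA scB muB k alpha beta \<longleftrightarrow>
     is_alt_algebra scX muX \<and> is_alt_algebra scA muA \<and> is_alt_algebra scB muB \<and>
     alg_hom scA muA scB muB alpha \<and> alg_hom scB muB scA muA beta \<and>
     alpha \<circ> beta = id \<and>
     is_kernel_Alt tz scX muX k scA muA alpha TYPE('b)"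

end

theory Submission
  imports Defs
begin

text \<open>The twist \<open>(b, x) \<mapsto> (b, x + \<phi> b)\<close> is an injective multiplicative map from the
  semidirect product onto the direct product \<open>B \<times> X\<close>, and the alternative laws transfer back
  along it. Kernel property and splitting are componentwise bookkeeping.\<close>

definition prod_scale :: "('k \<Rightarrow> 'b \<Rightarrow> 'b) \<Rightarrow> ('k \<Rightarrow> 'x \<Rightarrow> 'x) \<Rightarrow> 'k \<Rightarrow> 'b \<times> 'x \<Rightarrow> 'b \<times> 'x" where
  "prod_scale scB scX = (\<lambda>c (b, x). (scB c b, scX c x))"

definition prod_mult :: "('b \<Rightarrow> 'b \<Rightarrow> 'b) \<Rightarrow> ('x \<Rightarrow> 'x \<Rightarrow> 'x) \<Rightarrow> 'b \<times> 'x \<Rightarrow> 'b \<times> 'x \<Rightarrow> 'b \<times> 'x" where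
  "prod_mult muB muX = (\<lambda>(b, x) (b', x'). (muB b b', muX x x'))"

definition semidirect_mult ::
    "('b \<Rightarrow> 'x) \<Rightarrow> ('b \<Rightarrow> 'b \<Rightarrow> 'b) \<Rightarrow> ('x \<Rightarrow> 'x::plus \<Rightarrow> 'x) \<Rightarrow> 'b \<times> 'x \<Rightarrow> 'b \<times> 'x \<Rightarrow> 'b \<times> 'x" where
  "semidirect_mult phi muB muX =
     (\<lambda>(b, x) (b', x'). (muB b b', muX x x' + muX (phi b) x' + muX x (phi b')))"

definition twist :: "('b \<Rightarrow> 'x) \<Rightarrow> 'b \<times> 'x \<Rightarrow> 'b \<times> 'x::plus" where
  "twist phi = (\<lambda>(b, x). (b, x + phi b))"

lemma algebra_distribs:
  assumes "is_algebra sc mu"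
  shows algebra_add_left: "mu (x + y) z = mu x z + mu y z"
    and algebra_add_right: "mu z (x + y) = mu z x + mu z y"
    and algebra_scale_left: "mu (sc c x) y = sc c (mu x y)"
    and algebra_scale_right: "mu x (sc c y) = sc c (mu x y)"
  using assms unfolding is_algebra_def by blast+

lemma algebra_mult_zero:
  assumes "is_algebra sc mu"
  shows algebra_mult_zero_left: "mu 0 x = 0"
    and algebra_mult_zero_right: "mu x 0 = 0"
  using algebra_add_left[OF assms, of 0 0 x] algebra_add_right[OF assms, of x 0 0] by simp_all

lemma algebra_vector_space: "is_algebra sc mu \<Longrightarrow> vector_space sc"
  unfolding is_algebra_def by blast

lemma alt_algebra_is_algebra: "is_alt_algebra sc mu \<Longrightarrow> is_algebra sc mu"
  unfolding is_alt_algebra_def by blast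

lemma alt_algebra_laws:
  assumes "is_alt_algebra sc mu"
  shows alt_right: "mu (mu y x) x = mu y (mu x x)"
    and alt_left: "mu x (mu x y) = mu (mu x x) y"
  using assms unfolding is_alt_algebra_def by blast+

lemma alg_hom_add: "alg_hom sc1 mu1 sc2 mu2 f \<Longrightarrow> f (x + y) = f x + f y"
  and alg_hom_scale: "alg_hom sc1 mu1 sc2 mu2 f \<Longrightarrow> f (sc1 c x) = sc2 c (f x)"
  and alg_hom_mult: "alg_hom sc1 mu1 sc2 mu2 f \<Longrightarrow> f (mu1 x y) = mu2 (f x) (f y)"
  unfolding alg_hom_def by blast+

lemma alg_hom_zero: "alg_hom sc1 mu1 sc2 mu2 f \<Longrightarrow> f 0 = 0"
  using alg_hom_add[of sc1 mu1 sc2 mu2 f 0 0] by simp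

lemma vector_space_scale_zero: "vector_space sc \<Longrightarrow> sc c 0 = 0"
  and vector_space_scale_add: "vector_space sc \<Longrightarrow> sc c (x + y) = sc c x + sc c y"
  by (simp_all add: module.scale_zero_right module.scale_right_distrib
      flip: module_iff_vector_space)

lemma vector_space_prod_scale:
  assumes "vector_space scB" "vector_space scX"
  shows "vector_space (prod_scale scB scX)"
  using assms unfolding vector_space_def prod_scale_def by (auto simp: split_beta)

lemma is_alt_algebra_pullback:
  assumes "is_algebra sc mu" "is_alt_algebra sc' mu'" "inj f"
    and mult: "\<And>x y. f (mu x y) = mu' (f x) (f y)"
  shows "is_alt_algebra sc mu"
  unfolding is_alt_algebra_def
proof (intro conjI allI)
  show "mu (mu y x) x = mu y (mu x x)" for x y
    using injD[OF \<open>inj f\<close>] alt_right[OF assms(2)] by (simp add: mult)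
  show "mu x (mu x y) = mu (mu x x) y" for x y
    using injD[OF \<open>inj f\<close>] alt_left[OF assms(2)] by (simp add: mult)
qed (fact assms(1))

lemma is_alt_algebra_prod:
  assumes B: "is_alt_algebra scB muB" and X: "is_alt_algebra scX muX"
  shows "is_alt_algebra (prod_scale scB scX) (prod_mult muB muX)"
proof -
  note BA = alt_algebra_is_algebra[OF B] and XA = alt_algebra_is_algebra[OF X]
  have "is_algebra (prod_scale scB scX) (prod_mult muB muX)"
    unfolding is_algebra_def
    using vector_space_prod_scale[OF algebra_vector_space[OF BA] algebra_vector_space[OF XA]]
    by (auto simp: prod_scale_def prod_mult_def split_beta
        algebra_distribs[OF BA] algebra_distribs[OF XA])
  then show ?thesis
    unfolding is_alt_algebra_def
    by (auto simp: prod_mult_def split_beta alt_algebra_laws[OF B] alt_algebra_laws[OF X])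
qed

lemma is_algebra_semidirect:
  assumes B: "is_algebra scB muB" and X: "is_algebra scX muX"
    and phi: "alg_hom scB muB scX muX phi"
  shows "is_algebra (prod_scale scB scX) (semidirect_mult phi muB muX)"
  unfolding is_algebra_def
proof (intro conjI allI)
  show "vector_space (prod_scale scB scX)"
    by (intro vector_space_prod_scale algebra_vector_space[OF B] algebra_vector_space[OF X])
  note simps = semidirect_mult_def prod_scale_def algebra_distribs[OF B] algebra_distribs[OF X]
    alg_hom_add[OF phi] alg_hom_scale[OF phi]
  fix x y z c
  show "semidirect_mult phi muB muX (x + y) z =
      semidirect_mult phi muB muX x z + semidirect_mult phi muB muX y z"
    and "semidirect_mult phi muB muX z (x + y) =
      semidirect_mult phi muB muX z x + semidirect_mult phi muB muX z y"
    by (cases x; cases y; cases z; simp add: simps algebra_simps)+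
  show "semidirect_mult phi muB muX (prod_scale scB scX c x) y =
      prod_scale scB scX c (semidirect_mult phi muB muX x y)"
    and "semidirect_mult phi muB muX x (prod_scale scB scX c y) =
      prod_scale scB scX c (semidirect_mult phi muB muX x y)"
    using algebra_vector_space[OF X]
    by (cases x; cases y; simp add: simps vector_space_scale_add)+
qed

lemma inj_twist: "inj (twist (phi :: 'b \<Rightarrow> 'x::group_add))"
  by (rule injI) (auto simp: twist_def split_beta prod_eq_iff)

lemma twist_semidirect_mult:
  assumes X: "is_algebra scX muX" and phi: "alg_hom scB muB scX muX phi"
  shows "twist phi (semidirect_mult phi muB muX P Q) =
    prod_mult muB muX (twist phi P) (twist phi Q)"
  by (cases P; cases Q)
    (simp add: twist_def semidirect_mult_def prod_mult_def algebra_distribs[OF X]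
      alg_hom_mult[OF phi] algebra_simps)

lemma is_alt_algebra_semidirect:
  assumes B: "is_alt_algebra scB muB" and X: "is_alt_algebra scX muX"
    and phi: "alg_hom scB muB scX muX phi"
  shows "is_alt_algebra (prod_scale scB scX) (semidirect_mult phi muB muX)"
  using alt_algebra_is_algebra[OF B] alt_algebra_is_algebra[OF X]
  by (intro is_alt_algebra_pullback[OF _ is_alt_algebra_prod[OF B X] inj_twist[of phi]]
      is_algebra_semidirect twist_semidirect_mult[OF _ phi] phi)

lemma alg_hom_fst_semidirect:
  "alg_hom (prod_scale scB scX) (semidirect_mult phi muB muX) scB muB fst"
  unfolding alg_hom_def by (auto simp: prod_scale_def semidirect_mult_def split_beta)

lemma alg_hom_semidirect_section:
  assumes "is_algebra scX muX"
  shows "alg_hom scB muB (prod_scale scB scX) (semidirect_mult phi muB muX) (\<lambda>b. (b, 0))"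
  unfolding alg_hom_def
  by (auto simp: prod_scale_def semidirect_mult_def algebra_mult_zero[OF assms]
      vector_space_scale_zero[OF algebra_vector_space[OF assms]])

lemma alg_hom_semidirect_inclusion:
  assumes "is_algebra scB muB" "is_algebra scX muX" "alg_hom scB muB scX muX phi"
  shows "alg_hom scX muX (prod_scale scB scX) (semidirect_mult phi muB muX) (\<lambda>x. (0, x))"
  unfolding alg_hom_def
  by (auto simp: prod_scale_def semidirect_mult_def algebra_mult_zero[OF assms(1)]
      algebra_mult_zero[OF assms(2)] alg_hom_zero[OF assms(3)]
      vector_space_scale_zero[OF algebra_vector_space[OF assms(1)]])

text \<open>Only the inclusion being a morphism matters here, not the multiplication on \<open>B \<times> X\<close>;
  the factorisation of \<open>g\<close> is \<open>snd \<circ> g\<close>.\<close>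

lemma is_kernel_Alt_inclusion:
  fixes scA :: "'k::field \<Rightarrow> 'b::ab_group_add \<times> 'x::ab_group_add \<Rightarrow> 'b \<times> 'x"
  assumes X: "is_alt_algebra scX muX" and k: "alg_hom scX muX scA muA (\<lambda>x. (0, x))"
  shows "is_kernel_Alt TYPE('z::ab_group_add) scX muX (\<lambda>x. (0, x)) scA muA fst TYPE('b)"
  unfolding is_kernel_Alt_def
proof (intro conjI allI impI)
  fix scZ :: "'k \<Rightarrow> 'z \<Rightarrow> 'z" and muZ g
  assume "is_alt_algebra scZ muZ \<and> alg_hom scZ muZ scA muA g \<and> (\<forall>z. fst (g z) = 0)"
  then have g: "alg_hom scZ muZ scA muA g" and g_in_k: "\<And>z. g z = (0, snd (g z))"
    by (auto simp: prod_eq_iff)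
  have "alg_hom scZ muZ scX muX (snd \<circ> g)"
    unfolding alg_hom_def
  proof (intro conjI allI)
    fix z w c
    show "(snd \<circ> g) (z + w) = (snd \<circ> g) z + (snd \<circ> g) w"
      by (simp add: alg_hom_add[OF g])
    have "g (scZ c z) = (0, scX c (snd (g z)))"
      by (metis alg_hom_scale[OF g] alg_hom_scale[OF k] g_in_k)
    then show "(snd \<circ> g) (scZ c z) = scX c ((snd \<circ> g) z)" by simp
    have "g (muZ z w) = (0, muX (snd (g z)) (snd (g w)))"
      by (metis alg_hom_mult[OF g] alg_hom_mult[OF k] g_in_k)
    then show "(snd \<circ> g) (muZ z w) = muX ((snd \<circ> g) z) ((snd \<circ> g) w)" by simp
  qed
  then show "\<exists>!h. alg_hom scZ muZ scX muX h \<and> (\<forall>z. (0, h z) = g z)"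
    using g_in_k by (intro ex1I[of _ "snd \<circ> g"]) (auto simp: fun_eq_iff, metis snd_conv)
qed (use X k in simp_all)

theorem mainTheorem5:
  fixes scX :: "'k::field \<Rightarrow> 'x::ab_group_add \<Rightarrow> 'x" and muX :: "'x \<Rightarrow> 'x \<Rightarrow> 'x"
    and scB :: "'k \<Rightarrow> 'b::ab_group_add \<Rightarrow> 'b" and muB :: "'b \<Rightarrow> 'b \<Rightarrow> 'b"
    and phi :: "'b \<Rightarrow> 'x"
  assumes char: "(2::'k) \<noteq> 0"
    and X: "is_alt_algebra scX muX" and Xu: "unitary muX"
    and B: "is_alt_algebra scB muB"
    and phi: "alg_hom scB muB scX muX phi"
  shows "is_alt_algebra (\<lambda>c (b, x). (scB c b, scX c x))
           (\<lambda>(b, x) (b', x'). (muB b b', muX x x' + muX (phi b) x' + muX x (phi b')))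
       \<and> split_extension_Alt TYPE('z::ab_group_add) scX muX
           (\<lambda>c (b, x). (scB c b, scX c x))
           (\<lambda>(b, x) (b', x'). (muB b b', muX x x' + muX (phi b) x' + muX x (phi b')))
           scB muB (\<lambda>x. (0, x)) fst (\<lambda>b. (b, 0))"
proof -
  note BA = alt_algebra_is_algebra[OF B] and XA = alt_algebra_is_algebra[OF X]
  have A: "is_alt_algebra (prod_scale scB scX) (semidirect_mult phi muB muX)"
    using is_alt_algebra_semidirect[OF B X phi] .
  have "split_extension_Alt TYPE('z::ab_group_add) scX muX (prod_scale scB scX) (semidirect_mult phi muB muX)
      scB muB (\<lambda>x. (0, x)) fst (\<lambda>b. (b, 0))"
    unfolding split_extension_Alt_def
    using X A B alg_hom_fst_semidirect[of scB scX phi muB muX]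
      alg_hom_semidirect_section[OF XA, of scB muB phi]
      is_kernel_Alt_inclusion[where 'z='z, OF X alg_hom_semidirect_inclusion[OF BA XA phi]]
    by (simp add: fun_eq_iff)
  with A show ?thesis
    unfolding prod_scale_def semidirect_mult_def by simp
qed

end
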